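(* Let $S=\{R_0,\dots,R_d\}$ be a quasi-thin scheme and let $n$ be the number of triples $(u,v,w)\in\{0,\dots,d\}^3$ with $p_{uv}^w\neq 0$. Then $n=(d+1)^2+|\{(a,b):R_a,R_b\in S,\ |R_{a'}R_b|=2\}|$.
   Context: Let $X$ be a nonempty finite set. A scheme of class $d$ on $X$ is a partition $S=\{R_0,\dots,R_d\}$ of $X\times X$ into nonempty sets such that $R_0=\{(b,b):b\in X\}$; for each $c$ there is $c'$ with $R_{c'}=\{(f,e):(e,f)\in R_c\}$; and for all $i,j,k$ the intersection number $p_{ij}^k=|\{\ell\in X:(m,\ell)\in R_i,(\ell,n)\in R_j\}|$ does not depend on $(m,n)\in R_k$. The valency of $R_a$ is $k_a=p_{aa'}^0$; $S$ is quasi-thin if all $k_a\le 2$. The complex product is $R_aR_b=\{R_c\in S:p_{ab}^c>0\}$. *)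

theory Defs
  imports Main
begin

definition inter_count :: "'x set \<Rightarrow> (nat \<Rightarrow> ('x \<times> 'x) set) \<Rightarrow> nat \<Rightarrow> nat \<Rightarrow> 'x \<Rightarrow> 'x \<Rightarrow> nat" where
  "inter_count X R i j m n = card {l \<in> X. (m, l) \<in> R i \<and> (l, n) \<in> R j}"

definition is_scheme :: "'x set \<Rightarrow> (nat \<Rightarrow> ('x \<times> 'x) set) \<Rightarrow> nat \<Rightarrow> bool" where
  "is_scheme X R d \<longleftrightarrow>
     finite X \<and> X \<noteq> {} \<and>
     (\<forall>i\<le>d. R i \<noteq> {}) \<and>
     (\<forall>i\<le>d. \<forall>j\<le>d. i \<noteq> j \<longrightarrow> R i \<inter> R j = {}) \<and>
     (\<Union>i\<in>{0..d}. R i) = X \<times> X \<and>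
     R 0 = {(b, b) | b. b \<in> X} \<and>
     (\<forall>c\<le>d. \<exists>c'\<le>d. R c' = {(f, e). (e, f) \<in> R c}) \<and>
     (\<forall>i\<le>d. \<forall>j\<le>d. \<forall>k\<le>d. \<forall>m n m' n'. (m, n) \<in> R k \<longrightarrow> (m', n') \<in> R k \<longrightarrow>
        inter_count X R i j m n = inter_count X R i j m' n')"

text \<open>Intersection number p_{ij}^k (evaluated at any pair of R k).\<close>
definition inum :: "'x set \<Rightarrow> (nat \<Rightarrow> ('x \<times> 'x) set) \<Rightarrow> nat \<Rightarrow> nat \<Rightarrow> nat \<Rightarrow> nat" where
  "inum X R i j k = (let (m, n) = (SOME q. q \<in> R k) in inter_count X R i j m n)"

definition conv_idx :: "(nat \<Rightarrow> ('x \<times> 'x) set) \<Rightarrow> nat \<Rightarrow> nat \<Rightarrow> nat" where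
  "conv_idx R d c = (THE c'. c' \<le> d \<and> R c' = {(f, e). (e, f) \<in> R c})"

definition valency :: "'x set \<Rightarrow> (nat \<Rightarrow> ('x \<times> 'x) set) \<Rightarrow> nat \<Rightarrow> nat \<Rightarrow> nat" where
  "valency X R d a = inum X R a (conv_idx R d a) 0"

definition quasi_thin :: "'x set \<Rightarrow> (nat \<Rightarrow> ('x \<times> 'x) set) \<Rightarrow> nat \<Rightarrow> bool" where
  "quasi_thin X R d \<longleftrightarrow> (\<forall>a\<le>d. valency X R d a \<le> 2)"

definition cplx_prod :: "'x set \<Rightarrow> (nat \<Rightarrow> ('x \<times> 'x) set) \<Rightarrow> nat \<Rightarrow> nat \<Rightarrow> nat \<Rightarrow> ('x \<times> 'x) set set" where
  "cplx_prod X R d a b = {R c | c. c \<le> d \<and> inum X R a b c > 0}"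

end

theory Submission
  imports Defs
begin

(* Fix x and its R_u-neighbours y1, y2 (at most two, as S is quasi-thin). If p_uv^w > 0, every
   R_w-neighbour of x is an R_v-neighbour of y1 or of y2; if moreover k_w = 1, regularity of
   p_{wv'}^u forces this unique neighbour to be an R_v-neighbour of both y1 and y2. Since the
   R_w-neighbourhoods of x are disjoint and have k_w \<in> {1, 2} elements, counting gives, with
   N(y) the set of R_v-neighbours of y,
   2 |R_u R_v| \<le> |N(y1) \<union> N(y2)| + |N(y1) \<inter> N(y2)| = |N(y1)| + |N(y2)| \<le> 4.
   So every complex product has one or two elements, and summing over (u, v) gives the
   formula; a \<mapsto> a' is a permutation of the indices. *)

lemma card_pairs_eq_sum:
  fixes d :: nat
  shows "card {(a, b). a \<le> d \<and> b \<le> d \<and> Q a b} = (\<Sum>a\<le>d. card {b. b \<le> d \<and> Q a b})"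
proof -
  have "{(a, b). a \<le> d \<and> b \<le> d \<and> Q a b} = Sigma {..d} (\<lambda>a. {b. b \<le> d \<and> Q a b})"
    by auto
  then show ?thesis by (simp add: card_SigmaI)
qed

lemma card_triples_eq_sum:
  fixes d :: nat
  shows "card {(a, b, c). a \<le> d \<and> b \<le> d \<and> c \<le> d \<and> Q a b c}
    = (\<Sum>a\<le>d. \<Sum>b\<le>d. card {c. c \<le> d \<and> Q a b c})"
proof -
  have triples: "{(a, b, c). a \<le> d \<and> b \<le> d \<and> c \<le> d \<and> Q a b c}
      = Sigma {..d} (\<lambda>a. {(b, c). b \<le> d \<and> c \<le> d \<and> Q a b c})"
    by auto
  have "finite {(b, c). b \<le> d \<and> c \<le> d \<and> Q a b c}" for a
    by (rule finite_subset[of _ "{..d} \<times> {..d}"]) auto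
  then show ?thesis
    unfolding triples by (simp add: card_SigmaI card_pairs_eq_sum)
qed

lemma sum_one_or_two:
  assumes "finite A" and "\<And>a. a \<in> A \<Longrightarrow> f a \<in> {1, 2 :: nat}"
  shows "(\<Sum>a\<in>A. f a) = card A + card {a \<in> A. f a = 2}"
proof -
  have "(\<Sum>a\<in>A. f a) = (\<Sum>a\<in>A. 1 + (if f a = 2 then 1 else 0))"
    using assms(2) by (intro sum.cong) auto
  also have "\<dots> = card A + (\<Sum>a\<in>A. if f a = 2 then 1 else 0)"
    by (simp only: sum.distrib card_eq_sum)
  also have "(\<Sum>a\<in>A. if f a = 2 then 1 else 0) = card {a \<in> A. f a = 2}"
    using sum.inter_filter[OF assms(1), of "\<lambda>_. 1 :: nat" "\<lambda>a. f a = 2"] by simp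
  finally show ?thesis .
qed

locale scheme =
  fixes X :: "'x set" and R :: "nat \<Rightarrow> ('x \<times> 'x) set" and d :: nat
  assumes is_scheme: "is_scheme X R d"
begin

lemma finite_X: "finite X"
  and X_nonempty: "X \<noteq> {}"
  and R_0: "R 0 = {(b, b) | b. b \<in> X}"
  and relations_cover: "(\<Union>i\<in>{0..d}. R i) = X \<times> X"
  and relation_nonempty: "i \<le> d \<Longrightarrow> R i \<noteq> {}"
  and relations_disjoint: "i \<le> d \<Longrightarrow> j \<le> d \<Longrightarrow> i \<noteq> j \<Longrightarrow> R i \<inter> R j = {}"
  and converse_relation: "c \<le> d \<Longrightarrow> \<exists>c'\<le>d. R c' = (R c)\<inverse>"
  using is_scheme unfolding is_scheme_def converse_unfold by simp_all

lemma inter_count_regular: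
  assumes "i \<le> d" "j \<le> d" "k \<le> d" "(m, n) \<in> R k" "(m', n') \<in> R k"
  shows "inter_count X R i j m n = inter_count X R i j m' n'"
proof -
  have "\<forall>i\<le>d. \<forall>j\<le>d. \<forall>k\<le>d. \<forall>m n m' n'. (m, n) \<in> R k \<longrightarrow> (m', n') \<in> R k \<longrightarrow>
          inter_count X R i j m n = inter_count X R i j m' n'"
    using is_scheme unfolding is_scheme_def by (elim conjE) assumption
  from this[rule_format, OF assms] show ?thesis .
qed

lemma relation_subset: "i \<le> d \<Longrightarrow> R i \<subseteq> X \<times> X"
  unfolding relations_cover[symmetric] by auto

lemma relation_exists:
  assumes "x \<in> X" "y \<in> X"
  shows "\<exists>i\<le>d. (x, y) \<in> R i"
proof -
  have "(x, y) \<in> (\<Union>i\<in>{0..d}. R i)"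
    unfolding relations_cover using assms by simp
  then show ?thesis by auto
qed

lemma relation_unique: "i \<le> d \<Longrightarrow> j \<le> d \<Longrightarrow> p \<in> R i \<Longrightarrow> p \<in> R j \<Longrightarrow> i = j"
  using relations_disjoint by blast

lemma relation_index_eq:
  assumes "i \<le> d" "j \<le> d" "R i = R j"
  shows "i = j"
proof -
  obtain p where "p \<in> R i" using relation_nonempty[OF assms(1)] by blast
  then show ?thesis using relation_unique[OF assms(1,2)] assms(3) by simp
qed

lemma inj_on_R: "inj_on R {..d}"
  using relation_index_eq by (intro inj_onI) simp

lemma conv_idx_eq:
  assumes "c' \<le> d" "R c' = (R c)\<inverse>"
  shows "conv_idx R d c = c'"
proof -
  have conv_eq: "{(f, e). (e, f) \<in> R c} = (R c)\<inverse>" by auto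
  show ?thesis
    unfolding conv_idx_def conv_eq
  proof (rule the_equality)
    show "c'' = c'" if "c'' \<le> d \<and> R c'' = (R c)\<inverse>" for c''
      using relation_index_eq[of c'' c'] assms that by simp
  qed (use assms in simp)
qed

lemma conv_idx_le: "c \<le> d \<Longrightarrow> conv_idx R d c \<le> d"
  using converse_relation conv_idx_eq by metis

lemma R_conv_idx: "c \<le> d \<Longrightarrow> R (conv_idx R d c) = (R c)\<inverse>"
  using converse_relation conv_idx_eq by metis

lemma mem_conv_idx_iff: "c \<le> d \<Longrightarrow> (x, y) \<in> R (conv_idx R d c) \<longleftrightarrow> (y, x) \<in> R c"
  by (simp add: R_conv_idx)

lemma conv_idx_conv_idx:
  assumes "c \<le> d"
  shows "conv_idx R d (conv_idx R d c) = c"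
proof -
  have "R (conv_idx R d (conv_idx R d c)) = R c"
    using R_conv_idx conv_idx_le assms by simp
  then show ?thesis
    using relation_index_eq conv_idx_le assms by blast
qed

lemma bij_betw_conv_idx: "bij_betw (conv_idx R d) {..d} {..d}"
  by (rule bij_betw_byWitness[where f' = "conv_idx R d"])
    (auto simp: conv_idx_conv_idx conv_idx_le)

lemma card_conv_idx_pairs:
  "card {(a, b). a \<le> d \<and> b \<le> d \<and> P (conv_idx R d a) b} = card {(a, b). a \<le> d \<and> b \<le> d \<and> P a b}"
  unfolding card_pairs_eq_sum
  using sum.reindex_bij_betw[OF bij_betw_conv_idx, of "\<lambda>a. card {b. b \<le> d \<and> P a b}"] .

lemma inum_eq_inter_count:
  assumes "i \<le> d" "j \<le> d" "k \<le> d" "(m, n) \<in> R k"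
  shows "inum X R i j k = inter_count X R i j m n"
proof -
  obtain m' n' where some: "(SOME q. q \<in> R k) = (m', n')" "(m', n') \<in> R k"
    using someI[of "\<lambda>q. q \<in> R k", OF assms(4)] by (metis surj_pair)
  then have "inum X R i j k = inter_count X R i j m' n'"
    unfolding inum_def by simp
  also have "\<dots> = inter_count X R i j m n"
    by (rule inter_count_regular[OF assms(1-3) some(2) assms(4)])
  finally show ?thesis .
qed

lemma inum_neq_0_iff:
  assumes "u \<le> d" "v \<le> d" "w \<le> d" "(x, z) \<in> R w"
  shows "inum X R u v w \<noteq> 0 \<longleftrightarrow> (\<exists>y. (x, y) \<in> R u \<and> (y, z) \<in> R v)"
proof -
  have "inum X R u v w = card {y \<in> X. (x, y) \<in> R u \<and> (y, z) \<in> R v}"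
    using inum_eq_inter_count[OF assms] unfolding inter_count_def .
  moreover have "y \<in> X" if "(x, y) \<in> R u" for y
    using relation_subset[OF assms(1)] that by auto
  ultimately show ?thesis
    using finite_X by (auto simp: card_eq_0_iff)
qed

lemma card_cplx_prod:
  "card (cplx_prod X R d a b) = card {w. w \<le> d \<and> inum X R a b w \<noteq> 0}"
proof -
  have "cplx_prod X R d a b = R ` {w. w \<le> d \<and> inum X R a b w \<noteq> 0}"
    unfolding cplx_prod_def by auto
  moreover have "inj_on R {w. w \<le> d \<and> inum X R a b w \<noteq> 0}"
    by (rule inj_on_subset[OF inj_on_R]) auto
  ultimately show ?thesis by (simp add: card_image)
qed

definition nbhd :: "'x \<Rightarrow> nat \<Rightarrow> 'x set" where
  "nbhd x a = {y \<in> X. (x, y) \<in> R a}"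

lemma finite_nbhd: "finite (nbhd x a)"
  unfolding nbhd_def using finite_X by simp

lemma mem_nbhd_iff: "a \<le> d \<Longrightarrow> y \<in> nbhd x a \<longleftrightarrow> (x, y) \<in> R a"
  unfolding nbhd_def using relation_subset by blast

lemma card_nbhd:
  assumes "a \<le> d" "x \<in> X"
  shows "card (nbhd x a) = valency X R d a"
proof -
  have "valency X R d a = inter_count X R a (conv_idx R d a) x x"
    unfolding valency_def using R_0 assms conv_idx_le by (intro inum_eq_inter_count) auto
  also have "\<dots> = card (nbhd x a)"
    unfolding inter_count_def nbhd_def using mem_conv_idx_iff[OF assms(1)] by simp
  finally show ?thesis by simp
qed

lemma nbhd_nonempty:
  assumes "a \<le> d" "x \<in> X"
  shows "nbhd x a \<noteq> {}"
proof -
  obtain m n where "(m, n) \<in> R a" using relation_nonempty[OF assms(1)] by auto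
  then have "m \<in> X" "n \<in> nbhd m a" using relation_subset[OF assms(1)] mem_nbhd_iff[OF assms(1)] by auto
  then have "card (nbhd x a) \<noteq> 0"
    using card_nbhd assms finite_nbhd by (metis card_0_eq empty_iff)
  then show ?thesis by auto
qed

lemma inum_support_nonempty:
  assumes "u \<le> d" "v \<le> d"
  shows "\<exists>w\<le>d. inum X R u v w \<noteq> 0"
proof -
  obtain x where "x \<in> X" using X_nonempty by blast
  obtain y where "(x, y) \<in> R u" "y \<in> X"
    using nbhd_nonempty[OF assms(1) \<open>x \<in> X\<close>] unfolding nbhd_def by blast
  moreover obtain z where "(y, z) \<in> R v" "z \<in> X"
    using nbhd_nonempty[OF assms(2) \<open>y \<in> X\<close>] unfolding nbhd_def by blast
  moreover obtain w where "w \<le> d" "(x, z) \<in> R w"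
    using relation_exists \<open>x \<in> X\<close> \<open>z \<in> X\<close> by blast
  ultimately show ?thesis
    using inum_neq_0_iff[OF assms] by blast
qed

lemma card_UN_nbhd:
  assumes "A \<subseteq> {..d}"
  shows "card (\<Union>w\<in>A. nbhd x w) = (\<Sum>w\<in>A. card (nbhd x w))"
proof (rule card_UN_disjoint)
  show "finite A" using assms finite_subset by blast
  show "\<forall>w\<in>A. \<forall>w'\<in>A. w \<noteq> w' \<longrightarrow> nbhd x w \<inter> nbhd x w' = {}"
    using assms relation_unique unfolding nbhd_def by blast
qed (simp add: finite_nbhd)

lemma path_through_thin_relation:
  assumes "u \<le> d" "v \<le> d" "w \<le> d" "valency X R d w = 1" "inum X R u v w \<noteq> 0"
    and "(x, z) \<in> R w" "(x, y) \<in> R u"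
  shows "(y, z) \<in> R v"
proof -
  let ?v' = "conv_idx R d v"
  have v': "?v' \<le> d" using conv_idx_le[OF assms(2)] .
  obtain y0 where y0: "(x, y0) \<in> R u" "(y0, z) \<in> R v"
    using inum_neq_0_iff[OF assms(1-3,6)] assms(5) by blast
  from y0(2) have "(z, y0) \<in> R ?v'" using mem_conv_idx_iff[OF assms(2)] by simp
  then have "inum X R w ?v' u \<noteq> 0"
    using inum_neq_0_iff[OF assms(3) v' assms(1) y0(1)] assms(6) by blast
  then obtain l where l: "(x, l) \<in> R w" "(l, y) \<in> R ?v'"
    using inum_neq_0_iff[OF assms(3) v' assms(1,7)] by blast
  have "x \<in> X" using assms(6) relation_subset[OF assms(3)] by auto
  then have "card (nbhd x w) = 1" using card_nbhd assms(3,4) by simp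
  moreover have "l \<in> nbhd x w" "z \<in> nbhd x w"
    using l(1) assms(6) mem_nbhd_iff[OF assms(3)] by auto
  ultimately have "l = z" by (auto simp: card_1_singleton_iff)
  with l(2) show ?thesis using mem_conv_idx_iff[OF assms(2)] by simp
qed

lemma nbhd_subset_UN_nbhd:
  assumes "u \<le> d" "v \<le> d" "w \<le> d" "inum X R u v w \<noteq> 0"
  shows "nbhd x w \<subseteq> (\<Union>y\<in>nbhd x u. nbhd y v)"
proof
  fix z assume "z \<in> nbhd x w"
  then have "(x, z) \<in> R w" using mem_nbhd_iff[OF assms(3)] by simp
  then obtain y where "(x, y) \<in> R u" "(y, z) \<in> R v"
    using inum_neq_0_iff[OF assms(1-3)] assms(4) by blast
  then show "z \<in> (\<Union>y\<in>nbhd x u. nbhd y v)"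
    using mem_nbhd_iff[OF assms(1)] mem_nbhd_iff[OF assms(2)] by blast
qed

lemma thin_nbhd_subset_INT_nbhd:
  assumes "u \<le> d" "v \<le> d" "w \<le> d" "inum X R u v w \<noteq> 0" "valency X R d w = 1"
  shows "nbhd x w \<subseteq> (\<Inter>y\<in>nbhd x u. nbhd y v)"
proof (intro subsetI INT_I)
  fix z y assume "z \<in> nbhd x w" "y \<in> nbhd x u"
  then have "(x, z) \<in> R w" "(x, y) \<in> R u"
    using mem_nbhd_iff[OF assms(3)] mem_nbhd_iff[OF assms(1)] by simp_all
  then have "(y, z) \<in> R v"
    using path_through_thin_relation[OF assms(1-3,5,4)] by blast
  then show "z \<in> nbhd y v" using mem_nbhd_iff[OF assms(2)] by simp
qed

end

locale quasi_thin_scheme = scheme +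
  assumes quasi_thin: "quasi_thin X R d"
begin

lemma card_nbhd_1_or_2:
  assumes "a \<le> d" "x \<in> X"
  shows "card (nbhd x a) \<in> {1, 2}"
proof -
  have "card (nbhd x a) \<le> 2"
    using card_nbhd[OF assms] quasi_thin assms(1) unfolding quasi_thin_def by simp
  moreover have "card (nbhd x a) \<noteq> 0"
    using nbhd_nonempty[OF assms] finite_nbhd by simp
  ultimately show ?thesis by auto
qed

lemma nbhd_eq_pair:
  assumes "a \<le> d" "x \<in> X"
  obtains y1 y2 where "nbhd x a = {y1, y2}"
proof (cases "card (nbhd x a) = 1")
  case True
  then obtain y where "nbhd x a = {y}" by (auto simp: card_1_singleton_iff)
  with that[of y y] show ?thesis by simp
next
  case False
  then have "card (nbhd x a) = 2" using card_nbhd_1_or_2[OF assms] by simp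
  with that show ?thesis by (auto simp: card_2_iff)
qed

lemma sum_card_nbhd:
  assumes "W \<subseteq> {..d}" "x \<in> X"
  shows "(\<Sum>w\<in>W. card (nbhd x w)) + (\<Sum>w\<in>{w \<in> W. valency X R d w = 1}. card (nbhd x w))
    = 2 * card W"
proof -
  have fin: "finite W" using assms(1) finite_subset by blast
  have "(\<Sum>w\<in>{w \<in> W. valency X R d w = 1}. card (nbhd x w))
      = (\<Sum>w\<in>W. if valency X R d w = 1 then 1 else 0)"
    using assms card_nbhd by (simp add: sum.inter_filter[OF fin, symmetric] subset_iff)
  moreover have "card (nbhd x w) + (if valency X R d w = 1 then 1 else 0) = 2" if "w \<in> W" for w
    using card_nbhd_1_or_2[of w x] card_nbhd[of w x] assms that by auto
  then have "(\<Sum>w\<in>W. card (nbhd x w) + (if valency X R d w = 1 then 1 else 0)) = 2 * card W"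
    by simp
  ultimately show ?thesis by (simp add: sum.distrib)
qed

lemma card_inum_support_le_2:
  assumes "u \<le> d" "v \<le> d"
  shows "card {w. w \<le> d \<and> inum X R u v w \<noteq> 0} \<le> 2"
proof -
  define W where "W = {w. w \<le> d \<and> inum X R u v w \<noteq> 0}"
  define W1 where "W1 = {w \<in> W. valency X R d w = 1}"
  have W: "W \<subseteq> {..d}" "W1 \<subseteq> {..d}" unfolding W1_def W_def by auto
  obtain x where x: "x \<in> X" using X_nonempty by blast
  obtain y1 y2 where y: "nbhd x u = {y1, y2}" using nbhd_eq_pair[OF assms(1) x] .
  then have "y1 \<in> X" "y2 \<in> X" unfolding nbhd_def by auto
  have "(\<Union>w\<in>W. nbhd x w) \<subseteq> nbhd y1 v \<union> nbhd y2 v"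
    using nbhd_subset_UN_nbhd[OF assms] y unfolding W_def by fastforce
  moreover have "(\<Union>w\<in>W1. nbhd x w) \<subseteq> nbhd y1 v \<inter> nbhd y2 v"
    using thin_nbhd_subset_INT_nbhd[OF assms] y unfolding W1_def W_def by fastforce
  ultimately have "card (\<Union>w\<in>W. nbhd x w) + card (\<Union>w\<in>W1. nbhd x w)
      \<le> card (nbhd y1 v \<union> nbhd y2 v) + card (nbhd y1 v \<inter> nbhd y2 v)"
    by (intro add_mono card_mono) (simp_all add: finite_nbhd)
  also have "\<dots> = card (nbhd y1 v) + card (nbhd y2 v)"
    using card_Un_Int[OF finite_nbhd finite_nbhd] by simp
  also have "\<dots> \<le> 4"
    using card_nbhd_1_or_2[OF assms(2) \<open>y1 \<in> X\<close>] card_nbhd_1_or_2[OF assms(2) \<open>y2 \<in> X\<close>] by auto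
  finally have "2 * card W \<le> 4"
    using sum_card_nbhd[OF W(1) x] card_UN_nbhd[OF W(1)] card_UN_nbhd[OF W(2)]
    unfolding W1_def by simp
  then show ?thesis unfolding W_def by simp
qed

lemma card_inum_support:
  assumes "u \<le> d" "v \<le> d"
  shows "card {w. w \<le> d \<and> inum X R u v w \<noteq> 0} \<in> {1, 2}" (is "card ?W \<in> _")
proof -
  have "?W \<noteq> {}" using inum_support_nonempty[OF assms] by blast
  then have "card ?W \<noteq> 0" by simp
  then have "card ?W = 1 \<or> card ?W = 2" using card_inum_support_le_2[OF assms] by linarith
  then show ?thesis by simp
qed

lemma card_nonzero_inum_triples:
  "card {(u, v, w). u \<le> d \<and> v \<le> d \<and> w \<le> d \<and> inum X R u v w \<noteq> 0}
    = (d + 1)^2 + card {(u, v). u \<le> d \<and> v \<le> d \<and> card {w. w \<le> d \<and> inum X R u v w \<noteq> 0} = 2}"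
    (is "_ = _ + card {(u, v). u \<le> d \<and> v \<le> d \<and> ?c u v = 2}")
proof -
  have "card {(u, v, w). u \<le> d \<and> v \<le> d \<and> w \<le> d \<and> inum X R u v w \<noteq> 0}
      = (\<Sum>u\<le>d. \<Sum>v\<le>d. ?c u v)"
    by (rule card_triples_eq_sum)
  also have "\<dots> = (\<Sum>u\<le>d. (d + 1) + card {v. v \<le> d \<and> ?c u v = 2})"
    using sum_one_or_two[of "{..d}"] card_inum_support by (intro sum.cong) auto
  also have "\<dots> = (d + 1)^2 + (\<Sum>u\<le>d. card {v. v \<le> d \<and> ?c u v = 2})"
    by (simp only: sum.distrib) (simp add: power2_eq_square)
  also have "\<dots> = (d + 1)^2 + card {(u, v). u \<le> d \<and> v \<le> d \<and> ?c u v = 2}"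
    by (simp add: card_pairs_eq_sum)
  finally show ?thesis .
qed

end

theorem lemma2p2:
  fixes X :: "'x set" and R :: "nat \<Rightarrow> ('x \<times> 'x) set" and d :: nat
  assumes "is_scheme X R d" and "quasi_thin X R d"
  shows "card {(u, v, w). u \<le> d \<and> v \<le> d \<and> w \<le> d \<and> inum X R u v w \<noteq> 0}
         = (d + 1)^2 + card {(a, b). a \<le> d \<and> b \<le> d \<and> card (cplx_prod X R d (conv_idx R d a) b) = 2}"
proof -
  interpret quasi_thin_scheme X R d
    by unfold_locales (fact assms)+
  show ?thesis
    unfolding card_cplx_prod
      card_conv_idx_pairs[of "\<lambda>a b. card {w. w \<le> d \<and> inum X R a b w \<noteq> 0} = 2"]
    by (rule card_nonzero_inum_triples)
qed

end
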